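(* Let $\alpha,\beta,\gamma,\delta>0$ and $u_0,v_0,w_0>0$. Then the ODE system $u'=\delta uw$, $v'=\alpha vw$, $w'=-\beta uw-\gamma vw$ ($t>0$) with $u(0)=u_0$, $v(0)=v_0$, $w(0)=w_0$ has a unique global positive solution $(u,v,w)$, and there exist nonnegative numbers $u_\infty,v_\infty$ such that $u(t)\to u_\infty$, $v(t)\to v_\infty$ and $w(t)\to0$ as $t\to\infty$. Moreover, if $u_0=v_0$, then $\operatorname{sgn}(u_\infty-v_\infty)=\operatorname{sgn}(\delta-\alpha)$. *)

theory Defs
  imports "HOL-Analysis.Analysis"
begin

definition is_global_pos_sol ::
  "real \<Rightarrow> real \<Rightarrow> real \<Rightarrow> real \<Rightarrow> real \<Rightarrow> real \<Rightarrow> real \<Rightarrow>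
   (real \<Rightarrow> real) \<Rightarrow> (real \<Rightarrow> real) \<Rightarrow> (real \<Rightarrow> real) \<Rightarrow> bool" where
  "is_global_pos_sol \<alpha> \<beta> \<gamma> \<delta> u0 v0 w0 u v w \<longleftrightarrow>
     continuous_on {0..} u \<and> continuous_on {0..} v \<and> continuous_on {0..} w \<and>
     u 0 = u0 \<and> v 0 = v0 \<and> w 0 = w0 \<and>
     (\<forall>t\<ge>0. u t > 0 \<and> v t > 0 \<and> w t > 0) \<and>
     (\<forall>t>0. (u has_real_derivative \<delta> * u t * w t) (at t) \<and>
            (v has_real_derivative \<alpha> * v t * w t) (at t) \<and>
            (w has_real_derivative (- \<beta> * u t * w t - \<gamma> * v t * w t)) (at t))"

end

theory Submission
  imports Defs
begin

text \<open>
  With \<open>W t = \<integral>\<^sub>0\<^sup>t w\<close> the first two equations give \<open>u = u0 exp (\<delta> W)\<close> and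
  \<open>v = v0 exp (\<alpha> W)\<close>; then \<open>w' = - (\<beta> u + \<gamma> v) W'\<close> integrates to \<open>w = g W\<close> with
  \<open>g = w0 - F\<close>, \<open>F s = \<beta> u0 (exp (\<delta> s) - 1) / \<delta> + \<gamma> v0 (exp (\<alpha> s) - 1) / \<alpha>\<close>.
  So everything reduces to the scalar equation \<open>W' = g W\<close>, \<open>W 0 = 0\<close>. Here \<open>g\<close> is
  strictly decreasing with a unique zero \<open>S > 0\<close> and \<open>g s \<le> F' S * (S - s)\<close> below \<open>S\<close>,
  so the time \<open>\<integral> ds / g s\<close> needed to reach \<open>S\<close> is infinite. Inverting this time
  function yields the unique solution \<open>W\<close>, which increases to \<open>S\<close>. Hence
  \<open>u \<longlongrightarrow> u0 exp (\<delta> S)\<close>, \<open>v \<longlongrightarrow> v0 exp (\<alpha> S)\<close>, \<open>w \<longlongrightarrow> g S = 0\<close>, and for \<open>u0 = v0\<close>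
  the sign of the difference of the limits is that of \<open>(\<delta> - \<alpha>) S\<close>.
\<close>

lemma DERIV_zero_imp_constant_atLeast:
  fixes f :: "real \<Rightarrow> real"
  assumes "continuous_on {a..} f" "\<And>t. t > a \<Longrightarrow> (f has_real_derivative 0) (at t)" "a \<le> t"
  shows "f t = f a"
proof (cases "a = t")
  case False
  have "continuous_on {a..t} f"
    using assms(1) by (rule continuous_on_subset) auto
  with False show ?thesis
    using DERIV_isconst_end[of a t f] assms(2,3) by simp
qed simp

lemma sgn_scaled_exp_diff:
  fixes a S x y :: real
  assumes "a > 0" "S > 0"
  shows "sgn (a * exp (x * S) - a * exp (y * S)) = sgn (x - y)"
  using assms by (cases x y rule: linorder_cases) (auto simp: sgn_if mult_strict_right_mono)

locale uvw_system =
  fixes \<alpha> \<beta> \<gamma> \<delta> u0 v0 w0 :: real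
  assumes pos: "\<alpha> > 0" "\<beta> > 0" "\<gamma> > 0" "\<delta> > 0" "u0 > 0" "v0 > 0" "w0 > 0"
begin

definition F :: "real \<Rightarrow> real" where
  "F s = \<beta> * u0 / \<delta> * (exp (\<delta> * s) - 1) + \<gamma> * v0 / \<alpha> * (exp (\<alpha> * s) - 1)"

definition G :: "real \<Rightarrow> real" where
  "G s = \<beta> * u0 * exp (\<delta> * s) + \<gamma> * v0 * exp (\<alpha> * s)"

definition g :: "real \<Rightarrow> real" where
  "g s = w0 - F s"

lemma F_0 [simp]: "F 0 = 0"
  by (simp add: F_def)

lemma F_has_derivative: "(F has_real_derivative G s) (at s)"
  unfolding F_def [abs_def] G_def
  by (rule derivative_eq_intros refl)+ (use pos in \<open>simp add: field_simps\<close>)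

lemma isCont_F: "isCont F s"
  using F_has_derivative DERIV_isCont by blast

lemma G_pos: "G s > 0"
  using pos by (simp add: G_def add_pos_pos)

lemma G_mono: "s \<le> s' \<Longrightarrow> G s \<le> G s'"
  using pos unfolding G_def by (intro add_mono mult_left_mono) auto

lemma strict_mono_F: "strict_mono F"
  by (rule strict_monoI, rule DERIV_pos_imp_increasing) (use F_has_derivative G_pos in blast)+

lemma F_ge_linear:
  assumes "s \<ge> 0"
  shows "(\<beta> * u0 + \<gamma> * v0) * s \<le> F s"
proof -
  have "\<delta> * s \<le> exp (\<delta> * s) - 1" "\<alpha> * s \<le> exp (\<alpha> * s) - 1"
    using exp_ge_add_one_self[of "\<delta> * s"] exp_ge_add_one_self[of "\<alpha> * s"] by linarith+
  then have "\<beta> * u0 / \<delta> * (\<delta> * s) \<le> \<beta> * u0 / \<delta> * (exp (\<delta> * s) - 1)"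
    and "\<gamma> * v0 / \<alpha> * (\<alpha> * s) \<le> \<gamma> * v0 / \<alpha> * (exp (\<alpha> * s) - 1)"
    using pos by (simp_all add: mult_left_mono del: times_divide_eq_left)
  then show ?thesis
    using pos by (simp add: F_def algebra_simps)
qed

lemma F_eq_w0_ex: "\<exists>s > 0. F s = w0"
proof -
  define s1 where "s1 = w0 / (\<beta> * u0 + \<gamma> * v0)"
  have "\<beta> * u0 + \<gamma> * v0 > 0"
    using pos by (simp add: add_pos_pos)
  then have "s1 > 0" "w0 \<le> F s1"
    using pos F_ge_linear[of s1] by (simp_all add: s1_def)
  then obtain s where "0 \<le> s" "s \<le> s1" "F s = w0"
    using IVT'[of F 0 w0 s1] pos isCont_F by (auto simp: continuous_at_imp_continuous_on)
  moreover have "s \<noteq> 0"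
    using \<open>F s = w0\<close> pos by auto
  ultimately show ?thesis
    by (metis order_le_neq_trans)
qed

definition S :: real where
  "S = (SOME s. s > 0 \<and> F s = w0)"

lemma S_pos: "S > 0" and F_S: "F S = w0"
  using someI_ex[OF F_eq_w0_ex] by (auto simp: S_def)

lemma g_S [simp]: "g S = 0"
  by (simp add: g_def F_S)

lemma g_pos_iff: "g s > 0 \<longleftrightarrow> s < S"
  using strict_mono_less[OF strict_mono_F, of s S] F_S by (simp add: g_def)

lemma g_has_derivative: "(g has_real_derivative - G s) (at s)"
  unfolding g_def [abs_def] using DERIV_diff[OF DERIV_const F_has_derivative] by simp

lemma isCont_g: "isCont g s"
  using g_has_derivative DERIV_isCont by blast

text \<open>The Lipschitz bound that makes \<open>S\<close> unreachable in finite time.\<close>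
lemma g_le_linear:
  assumes "s \<le> S"
  shows "g s \<le> G S * (S - s)"
proof -
  have "G S * s - F s \<le> G S * S - F S"
  proof (rule DERIV_nonneg_imp_increasing_open[OF assms])
    show "continuous_on {s..S} (\<lambda>x. G S * x - F x)"
      by (intro continuous_intros continuous_at_imp_continuous_on ballI isCont_F)
    fix z assume "s < z" "z < S"
    then show "\<exists>y. ((\<lambda>x. G S * x - F x) has_real_derivative y) (at z) \<and> 0 \<le> y"
      using DERIV_diff[OF DERIV_cmult[OF DERIV_ident, of "G S"] F_has_derivative[of z]] G_mono[of z S]
      by (intro exI[of _ "G S - G z"]) simp
  qed
  then show ?thesis
    using F_S by (simp add: g_def algebra_simps)
qed

text \<open>
  \<open>T s - T 0\<close> is the time the solution \<open>W\<close> of \<open>W' = g W\<close>, \<open>W 0 = 0\<close> needs to reach \<open>s\<close>.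
  The lower limit \<open>-1\<close> keeps \<open>0\<close> in the interior of the domain \<open>]-1, S[\<close> of \<open>T\<close>.
\<close>
definition T :: "real \<Rightarrow> real" where
  "T s = integral {-1..s} (\<lambda>\<sigma>. 1 / g \<sigma>)"

lemma T_m1 [simp]: "T (-1) = 0"
  by (simp add: T_def)

lemma continuous_on_inverse_g: "r < S \<Longrightarrow> continuous_on {-1..r} (\<lambda>\<sigma>. 1 / g \<sigma>)"
  using g_pos_iff
  by (intro continuous_on_divide continuous_on_const continuous_at_imp_continuous_on ballI isCont_g)
     (auto simp: less_imp_neq[symmetric])

lemma T_has_derivative_within:
  assumes "r < S" "x \<in> {-1..r}"
  shows "(T has_real_derivative 1 / g x) (at x within {-1..r})"
  unfolding T_def [abs_def]
  using integral_has_real_derivative[OF continuous_on_inverse_g[OF assms(1)]] assms(2) by auto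

lemma T_has_derivative:
  assumes "-1 < s" "s < S"
  shows "(T has_real_derivative 1 / g s) (at s)"
proof -
  define r where "r = (s + S) / 2"
  have "s < r" "r < S"
    using assms by (auto simp: r_def)
  then show ?thesis
    using T_has_derivative_within[of r s] at_within_Icc_at[of "-1" s r] assms by simp
qed

lemma continuous_on_T: "r < S \<Longrightarrow> continuous_on {-1..r} T"
  by (rule DERIV_continuous_on, erule T_has_derivative_within)

lemma T_strict_mono:
  assumes "-1 \<le> x" "x < y" "y < S"
  shows "T x < T y"
proof (rule DERIV_pos_imp_increasing_open[OF assms(2)])
  show "continuous_on {x..y} T"
    by (rule continuous_on_subset[OF continuous_on_T[OF assms(3)]]) (use assms(1) in auto)
  fix z assume "x < z" "z < y"
  then show "\<exists>d. (T has_real_derivative d) (at z) \<and> d > 0"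
    using assms T_has_derivative[of z] g_pos_iff[of z] by auto
qed

lemma T_0_pos: "T 0 > 0"
  using T_strict_mono[of "-1" 0] S_pos by simp

lemma T_lower_bound:
  assumes "0 \<le> s" "s < S"
  shows "T 0 + (ln S - ln (S - s)) / G S \<le> T s"
proof -
  have "T 0 + ln (S - 0) / G S \<le> T s + ln (S - s) / G S"
  proof (rule DERIV_nonneg_imp_increasing_open[OF assms(1)])
    have "continuous_on {0..s} T"
      by (rule continuous_on_subset[OF continuous_on_T[OF assms(2)]]) auto
    then show "continuous_on {0..s} (\<lambda>x. T x + ln (S - x) / G S)"
      using assms G_pos[of S] by (intro continuous_intros) auto
    fix z assume z: "0 < z" "z < s"
    have "((\<lambda>x. ln (S - x) / G S) has_real_derivative - 1 / (G S * (S - z))) (at z)"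
      using z assms G_pos[of S] by (auto intro!: derivative_eq_intros simp: field_simps)
    moreover have "(T has_real_derivative 1 / g z) (at z)"
      using T_has_derivative z assms by simp
    ultimately have "((\<lambda>x. T x + ln (S - x) / G S) has_real_derivative 1 / g z - 1 / (G S * (S - z))) (at z)"
      using DERIV_add by fastforce
    moreover have "1 / (G S * (S - z)) \<le> 1 / g z"
      using z assms g_pos_iff[of z] g_le_linear[of z] by (intro frac_le) auto
    ultimately show "\<exists>d. ((\<lambda>x. T x + ln (S - x) / G S) has_real_derivative d) (at z) \<and> 0 \<le> d"
      by force
  qed
  then show ?thesis
    by (simp add: diff_divide_distrib)
qed

lemma T_surj:
  assumes "y > 0"
  shows "\<exists>s. -1 < s \<and> s < S \<and> T s = y"
proof -
  define m where "m = max 0 (y - T 0)"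
  define s1 where "s1 = S - S * exp (- (G S * m))"
  have "exp (- (G S * m)) \<le> 1"
    using G_pos[of S] by (simp add: m_def)
  then have s1: "0 \<le> s1" "s1 < S"
    using S_pos by (simp_all add: s1_def)
  have "ln (S - s1) = ln S - G S * m"
    using S_pos by (simp add: s1_def ln_mult)
  then have "y \<le> T s1"
    using T_lower_bound[OF s1] G_pos[of S] by (simp add: m_def)
  then obtain s where "-1 \<le> s" "s \<le> s1" "T s = y"
    using IVT'[of T "-1" y s1] assms s1 continuous_on_T[OF s1(2)] by auto
  moreover have "s \<noteq> -1"
    using \<open>T s = y\<close> assms by auto
  ultimately show ?thesis
    using s1 by (intro exI[of _ s]) auto
qed

lemma T_inj: "-1 < x \<Longrightarrow> x < S \<Longrightarrow> -1 < y \<Longrightarrow> y < S \<Longrightarrow> T x = T y \<Longrightarrow> x = y"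
  using T_strict_mono[of x y] T_strict_mono[of y x] by (cases x y rule: linorder_cases) auto

definition T_inv :: "real \<Rightarrow> real" where
  "T_inv y = (THE s. -1 < s \<and> s < S \<and> T s = y)"

lemma T_inv_T:
  assumes "-1 < s" "s < S"
  shows "T_inv (T s) = s"
  unfolding T_inv_def
proof (rule the_equality)
  show "-1 < s \<and> s < S \<and> T s = T s"
    using assms by simp
  show "x = s" if "-1 < x \<and> x < S \<and> T x = T s" for x
    using that assms T_inj by blast
qed

lemma T_T_inv:
  assumes "y > 0"
  shows "T (T_inv y) = y" "-1 < T_inv y" "T_inv y < S"
proof -
  obtain s where s: "-1 < s" "s < S" "T s = y"
    using T_surj[OF assms] by blast
  then have "T_inv y = s"
    using T_inv_T by blast
  with s show "T (T_inv y) = y" "-1 < T_inv y" "T_inv y < S"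
    by simp_all
qed

lemma isCont_T_inv:
  assumes "y > 0"
  shows "isCont T_inv y"
proof -
  define s where "s = T_inv y"
  have s: "-1 < s" "s < S" "T s = y"
    using T_T_inv[OF assms] by (auto simp: s_def)
  have "isCont T_inv (T s)"
  proof (rule isCont_inverse_function2[of "(s - 1) / 2" s "(s + S) / 2"])
    fix z assume "(s - 1) / 2 \<le> z" "z \<le> (s + S) / 2"
    then have "-1 < z" "z < S"
      using s by auto
    then show "T_inv (T z) = z" "isCont T z"
      using T_inv_T T_has_derivative DERIV_isCont by blast+
  qed (use s in auto)
  then show ?thesis
    using s by simp
qed

lemma T_inv_has_derivative:
  assumes "y > 0"
  shows "(T_inv has_real_derivative g (T_inv y)) (at y)"
proof -
  have "-1 < T_inv y" "T_inv y < S"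
    using T_T_inv[OF assms] by auto
  then have "(T_inv has_real_derivative inverse (1 / g (T_inv y))) (at y)"
    using assms T_has_derivative g_pos_iff[of "T_inv y"] T_T_inv isCont_T_inv
    by (intro DERIV_inverse_function[where f = T and a = 0 and b = "y + 1"]) auto
  then show ?thesis
    by simp
qed

definition W :: "real \<Rightarrow> real" where
  "W t = T_inv (t + T 0)"

lemma W_bounds: "t \<ge> 0 \<Longrightarrow> -1 < W t \<and> W t < S"
  using T_T_inv[of "t + T 0"] T_0_pos by (simp add: W_def)

lemma T_W: "t \<ge> 0 \<Longrightarrow> T (W t) = t + T 0"
  using T_T_inv[of "t + T 0"] T_0_pos by (simp add: W_def)

lemma W_0 [simp]: "W 0 = 0"
  using T_inv_T[of 0] S_pos by (simp add: W_def)

lemma W_has_derivative: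
  assumes "t \<ge> 0"
  shows "(W has_real_derivative g (W t)) (at t)"
  using DERIV_chain2[OF T_inv_has_derivative[of "t + T 0"] DERIV_add[OF DERIV_ident DERIV_const]]
    T_0_pos assms by (simp add: W_def [abs_def])

lemma continuous_on_W: "continuous_on {0..} W"
  using W_has_derivative DERIV_isCont by (intro continuous_at_imp_continuous_on ballI) auto

lemma W_tendsto: "(W \<longlongrightarrow> S) at_top"
proof (rule order_tendstoI)
  fix a assume "a < S"
  define s where "s = (max a 0 + S) / 2"
  have s: "a < s" "0 < s" "s < S"
    using \<open>a < S\<close> S_pos by (auto simp: s_def)
  have "a < W t" if "t \<ge> max 0 (T s)" for t
  proof -
    have "T s \<le> T (W t)"
      using that T_W[of t] T_0_pos by simp
    then have "s \<le> W t"
      using T_strict_mono[of "W t" s] W_bounds[of t] that s by force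
    then show ?thesis
      using s by simp
  qed
  then show "eventually (\<lambda>t. a < W t) at_top"
    unfolding eventually_at_top_linorder by blast
next
  fix a assume "S < a"
  then show "eventually (\<lambda>t. W t < a) at_top"
    using W_bounds unfolding eventually_at_top_linorder by (metis less_trans)
qed

definition u_sol :: "real \<Rightarrow> real" where
  "u_sol t = u0 * exp (\<delta> * W t)"

definition v_sol :: "real \<Rightarrow> real" where
  "v_sol t = v0 * exp (\<alpha> * W t)"

definition w_sol :: "real \<Rightarrow> real" where
  "w_sol t = g (W t)"

lemma is_global_pos_sol: "is_global_pos_sol \<alpha> \<beta> \<gamma> \<delta> u0 v0 w0 u_sol v_sol w_sol"
  unfolding is_global_pos_sol_def
proof (intro conjI allI impI)
  show "continuous_on {0..} u_sol" "continuous_on {0..} v_sol"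
    unfolding u_sol_def [abs_def] v_sol_def [abs_def]
    using continuous_on_W by (auto intro!: continuous_intros)
  show "continuous_on {0..} w_sol"
    unfolding w_sol_def [abs_def]
    by (rule continuous_on_compose2[OF _ continuous_on_W, of UNIV])
       (auto intro: continuous_at_imp_continuous_on isCont_g)
  show "u_sol 0 = u0" "v_sol 0 = v0" "w_sol 0 = w0"
    by (simp_all add: u_sol_def v_sol_def w_sol_def g_def)
  fix t :: real
  assume "0 \<le> t"
  then show "0 < u_sol t" "0 < v_sol t" "0 < w_sol t"
    using pos W_bounds[of t] g_pos_iff by (simp_all add: u_sol_def v_sol_def w_sol_def)
next
  fix t :: real
  assume "0 < t"
  then have W': "(W has_real_derivative w_sol t) (at t)"
    using W_has_derivative by (simp add: w_sol_def)
  show "(u_sol has_real_derivative \<delta> * u_sol t * w_sol t) (at t)"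
    unfolding u_sol_def [abs_def] by (rule derivative_eq_intros refl W')+ (simp add: u_sol_def)
  show "(v_sol has_real_derivative \<alpha> * v_sol t * w_sol t) (at t)"
    unfolding v_sol_def [abs_def] by (rule derivative_eq_intros refl W')+ (simp add: v_sol_def)
  have "- G (W t) * w_sol t = - \<beta> * u_sol t * w_sol t - \<gamma> * v_sol t * w_sol t"
    by (simp add: G_def u_sol_def v_sol_def algebra_simps)
  then show "(w_sol has_real_derivative - \<beta> * u_sol t * w_sol t - \<gamma> * v_sol t * w_sol t) (at t)"
    using DERIV_chain2[OF g_has_derivative W'] by (simp add: w_sol_def [abs_def])
qed

lemma u_sol_tendsto: "(u_sol \<longlongrightarrow> u0 * exp (\<delta> * S)) at_top"
  unfolding u_sol_def [abs_def] by (intro tendsto_intros W_tendsto)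

lemma v_sol_tendsto: "(v_sol \<longlongrightarrow> v0 * exp (\<alpha> * S)) at_top"
  unfolding v_sol_def [abs_def] by (intro tendsto_intros W_tendsto)

lemma w_sol_tendsto: "(w_sol \<longlongrightarrow> 0) at_top"
  using isCont_tendsto_compose[OF isCont_g W_tendsto] by (simp add: w_sol_def [abs_def])

end

locale uvw_solution = uvw_system +
  fixes u v w :: "real \<Rightarrow> real"
  assumes solution: "is_global_pos_sol \<alpha> \<beta> \<gamma> \<delta> u0 v0 w0 u v w"
begin

lemma continuous: "continuous_on {0..} u" "continuous_on {0..} v" "continuous_on {0..} w"
  and initial [simp]: "u 0 = u0" "v 0 = v0" "w 0 = w0"
  and positive: "t \<ge> 0 \<Longrightarrow> u t > 0" "t \<ge> 0 \<Longrightarrow> v t > 0" "t \<ge> 0 \<Longrightarrow> w t > 0"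
  and derivatives: "t > 0 \<Longrightarrow> (u has_real_derivative \<delta> * u t * w t) (at t)"
    "t > 0 \<Longrightarrow> (v has_real_derivative \<alpha> * v t * w t) (at t)"
    "t > 0 \<Longrightarrow> (w has_real_derivative (- \<beta> * u t * w t - \<gamma> * v t * w t)) (at t)"
  using solution unfolding is_global_pos_sol_def by auto

lemma ln_has_derivative:
  assumes "t > 0"
  shows "((\<lambda>x. ln (u x)) has_real_derivative \<delta> * w t) (at t)"
    and "((\<lambda>x. ln (v x)) has_real_derivative \<alpha> * w t) (at t)"
  using DERIV_chain2[OF DERIV_ln_divide derivatives(1)[OF assms]]
    DERIV_chain2[OF DERIV_ln_divide derivatives(2)[OF assms]] positive[of t] assms
  by simp_all

text \<open>\<open>V t = \<integral>\<^sub>0\<^sup>t w\<close>, read off from \<open>u\<close>.\<close>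
definition V :: "real \<Rightarrow> real" where
  "V t = (ln (u t) - ln u0) / \<delta>"

lemma V_0 [simp]: "V 0 = 0"
  by (simp add: V_def)

lemma continuous_on_V: "continuous_on {0..} V"
  unfolding V_def [abs_def]
  using positive(1) pos by (intro continuous_intros continuous) force+

lemma V_has_derivative: "t > 0 \<Longrightarrow> (V has_real_derivative w t) (at t)"
  using DERIV_cdivide[OF DERIV_diff[OF ln_has_derivative(1) DERIV_const[of "ln u0"]], of t \<delta>] pos
  by (simp add: V_def [abs_def])

lemma u_eq: "t \<ge> 0 \<Longrightarrow> u t = u0 * exp (\<delta> * V t)"
  using positive(1)[of t] pos by (simp add: V_def exp_diff)

lemma v_eq:
  assumes "t \<ge> 0"
  shows "v t = v0 * exp (\<alpha> * V t)"
proof -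
  have "ln (v t) - \<alpha> * V t = ln (v 0) - \<alpha> * V 0"
  proof (rule DERIV_zero_imp_constant_atLeast[OF _ _ assms])
    show "continuous_on {0..} (\<lambda>t. ln (v t) - \<alpha> * V t)"
      using positive(2) by (intro continuous_intros continuous continuous_on_V) force+
    show "((\<lambda>t. ln (v t) - \<alpha> * V t) has_real_derivative 0) (at t)" if "t > 0" for t
      using DERIV_diff[OF ln_has_derivative(2) DERIV_cmult[OF V_has_derivative, of _ \<alpha>]] that
      by simp
  qed
  then have "exp (ln (v t)) = exp (ln v0 + \<alpha> * V t)"
    by simp
  then show ?thesis
    using positive(2)[OF assms] pos by (simp add: exp_add)
qed

lemma w_eq:
  assumes "t \<ge> 0"
  shows "w t = g (V t)"
proof -
  have "w t + F (V t) = w 0 + F (V 0)"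
  proof (rule DERIV_zero_imp_constant_atLeast[OF _ _ assms])
    show "continuous_on {0..} (\<lambda>t. w t + F (V t))"
      by (intro continuous_on_add continuous continuous_on_compose2[OF _ continuous_on_V, of UNIV])
         (auto intro: continuous_at_imp_continuous_on isCont_F)
    fix t :: real assume "t > 0"
    then have "- \<beta> * u t * w t - \<gamma> * v t * w t + G (V t) * w t = 0"
      using u_eq[of t] v_eq[of t] by (simp add: G_def algebra_simps)
    then show "((\<lambda>t. w t + F (V t)) has_real_derivative 0) (at t)"
      using DERIV_add[OF derivatives(3) DERIV_chain2[OF F_has_derivative V_has_derivative], OF \<open>t > 0\<close> \<open>t > 0\<close>]
      by simp
  qed
  then show ?thesis
    by (simp add: g_def)
qed

lemma V_bounds:
  assumes "t \<ge> 0"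
  shows "0 \<le> V t" "V t < S"
proof -
  have "V 0 \<le> V t"
  proof (rule DERIV_nonneg_imp_increasing_open[OF assms])
    show "continuous_on {0..t} V"
      by (rule continuous_on_subset[OF continuous_on_V]) auto
    fix z :: real assume "0 < z" "z < t"
    then have "(V has_real_derivative w z) (at z)" "0 \<le> w z"
      using V_has_derivative[of z] positive(3)[of z] by simp_all
    then show "\<exists>d. (V has_real_derivative d) (at z) \<and> 0 \<le> d"
      by blast
  qed
  then show "0 \<le> V t"
    by simp
  show "V t < S"
    using w_eq[OF assms] positive(3)[OF assms] g_pos_iff by simp
qed

lemma T_V:
  assumes "t \<ge> 0"
  shows "T (V t) = t + T 0"
proof -
  have "T (V t) - t = T (V 0) - 0"
  proof (rule DERIV_zero_imp_constant_atLeast[OF _ _ assms])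
    have "continuous_on {-1<..<S} T"
      using T_has_derivative DERIV_isCont by (intro continuous_at_imp_continuous_on ballI) auto
    then show "continuous_on {0..} (\<lambda>t. T (V t) - t)"
      using V_bounds by (intro continuous_intros continuous_on_compose2[OF _ continuous_on_V]) force+
    fix t :: real assume "t > 0"
    then have "-1 < V t" "V t < S" "1 / g (V t) * w t = 1"
      using V_bounds[of t] w_eq[of t] positive(3)[of t] by simp_all
    then show "((\<lambda>t. T (V t) - t) has_real_derivative 0) (at t)"
      using DERIV_diff[OF DERIV_chain2[OF T_has_derivative V_has_derivative] DERIV_ident] \<open>t > 0\<close>
      by fastforce
  qed
  then show ?thesis
    by simp
qed

lemma eq_solution:
  assumes "t \<ge> 0"
  shows "u t = u_sol t" "v t = v_sol t" "w t = w_sol t"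
proof -
  have "V t = W t"
    using T_V[OF assms] T_inv_T[of "V t"] V_bounds[OF assms] by (simp add: W_def)
  then show "u t = u_sol t" "v t = v_sol t" "w t = w_sol t"
    using u_eq[OF assms] v_eq[OF assms] w_eq[OF assms] by (simp_all add: u_sol_def v_sol_def w_sol_def)
qed

end

lemma (in uvw_system) global_pos_sol_unique:
  assumes "is_global_pos_sol \<alpha> \<beta> \<gamma> \<delta> u0 v0 w0 u v w" "t \<ge> 0"
  shows "u t = u_sol t \<and> v t = v_sol t \<and> w t = w_sol t"
proof -
  interpret uvw_solution \<alpha> \<beta> \<gamma> \<delta> u0 v0 w0 u v w
    using assms(1) by unfold_locales
  show ?thesis
    using eq_solution[OF assms(2)] by simp
qed

theorem mainTheorem19:
  fixes \<alpha> \<beta> \<gamma> \<delta> u0 v0 w0 :: real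
  assumes "\<alpha> > 0" "\<beta> > 0" "\<gamma> > 0" "\<delta> > 0"
    and "u0 > 0" "v0 > 0" "w0 > 0"
  shows "\<exists>u v w. is_global_pos_sol \<alpha> \<beta> \<gamma> \<delta> u0 v0 w0 u v w \<and>
           (\<forall>u' v' w'. is_global_pos_sol \<alpha> \<beta> \<gamma> \<delta> u0 v0 w0 u' v' w' \<longrightarrow>
              (\<forall>t\<ge>0. u' t = u t \<and> v' t = v t \<and> w' t = w t)) \<and>
           (\<exists>u_inf v_inf. u_inf \<ge> 0 \<and> v_inf \<ge> 0 \<and>
              (u \<longlongrightarrow> u_inf) at_top \<and> (v \<longlongrightarrow> v_inf) at_top \<and>
              (w \<longlongrightarrow> 0) at_top \<and>
              (u0 = v0 \<longrightarrow> sgn (u_inf - v_inf) = sgn (\<delta> - \<alpha>)))"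
proof -
  interpret uvw_system \<alpha> \<beta> \<gamma> \<delta> u0 v0 w0
    using assms by unfold_locales
  have "u0 = v0 \<Longrightarrow> sgn (u0 * exp (\<delta> * S) - v0 * exp (\<alpha> * S)) = sgn (\<delta> - \<alpha>)"
    using sgn_scaled_exp_diff[of u0 S \<delta> \<alpha>] assms S_pos by simp
  then show ?thesis
    using is_global_pos_sol global_pos_sol_unique u_sol_tendsto v_sol_tendsto w_sol_tendsto assms
    by (intro exI[of _ u_sol] exI[of _ v_sol] exI[of _ w_sol] conjI exI[of _ "u0 * exp (\<delta> * S)"]
        exI[of _ "v0 * exp (\<alpha> * S)"]) auto
qed

end
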